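(* Let $X$ be a finite-dimensional simplicial complex satisfying: (1) for all vertices $x,y$ of $X$, $\Sigma_x\subseteq\Sigma_y$ implies $x=y$; (2) if $K$ is a simplex of $X$ and $x$ is a vertex of $X$ with $x\notin K$, then there is a maximal simplex $L$ of $X$ with $K\subseteq L$ and $x\notin L$. Then $\mathrm{Aut}(X)$ is isomorphic to $\mathrm{Aut}(\mathcal{N}(X))$.
   Context: For a vertex $x$ of $X$, $\Sigma_x$ is the collection of maximal simplices of $X$ containing $x$. $\mathcal{N}(X)$ is the nerve of the collection of maximal simplices of $X$: its vertices are the maximal simplices of $X$, and a finite set of them is a simplex iff their common intersection is non-empty. $\mathrm{Aut}$ denotes the group of simplicial automorphisms. *)

theory Defs
  imports "HOL-Algebra.Group"
begin

definition simplicial_complex :: "'a set set \<Rightarrow> bool" where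
  "simplicial_complex K \<longleftrightarrow>
     (\<forall>\<sigma>\<in>K. finite \<sigma> \<and> \<sigma> \<noteq> {}) \<and>
     (\<forall>\<sigma>\<in>K. \<forall>\<tau>. \<tau> \<subseteq> \<sigma> \<and> \<tau> \<noteq> {} \<longrightarrow> \<tau> \<in> K)"

definition vertices :: "'a set set \<Rightarrow> 'a set" where
  "vertices K = \<Union>K"

definition finite_dimensional :: "'a set set \<Rightarrow> bool" where
  "finite_dimensional K \<longleftrightarrow> (\<exists>n::nat. \<forall>\<sigma>\<in>K. card \<sigma> \<le> n)"

definition maximal_simplices :: "'a set set \<Rightarrow> 'a set set" where
  "maximal_simplices K = {\<sigma>\<in>K. \<forall>\<tau>\<in>K. \<sigma> \<subseteq> \<tau> \<longrightarrow> \<tau> = \<sigma>}"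

definition Sigma_at :: "'a set set \<Rightarrow> 'a \<Rightarrow> 'a set set" where
  "Sigma_at K x = {\<sigma>\<in>maximal_simplices K. x \<in> \<sigma>}"

definition nerve :: "'a set set \<Rightarrow> 'a set set set" where
  "nerve K = {F. finite F \<and> F \<noteq> {} \<and> F \<subseteq> maximal_simplices K \<and> \<Inter>F \<noteq> {}}"

definition simplicial_aut :: "'a set set \<Rightarrow> ('a \<Rightarrow> 'a) \<Rightarrow> bool" where
  "simplicial_aut K f \<longleftrightarrow> bij_betw f (vertices K) (vertices K) \<and>
     (\<forall>\<sigma>. \<sigma> \<subseteq> vertices K \<longrightarrow> (\<sigma> \<in> K \<longleftrightarrow> f ` \<sigma> \<in> K))"

definition Aut_group :: "'a set set \<Rightarrow> ('a \<Rightarrow> 'a) monoid" where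
  "Aut_group K = \<lparr>carrier = {f. simplicial_aut K f \<and> (\<forall>x. x \<notin> vertices K \<longrightarrow> f x = x)},
                  mult = (\<lambda>f g. f \<circ> g), one = id\<rparr>"

end

theory Submission
  imports Defs
begin

(* An automorphism f of X permutes the maximal simplices, so f induces the automorphism
   sigma |-> f ` sigma of the nerve, and this assignment is a homomorphism. It is injective
   because f maps Sigma_x onto Sigma_(f x) and, by condition (1), a vertex x is determined
   by Sigma_x.

   For surjectivity, let p be an automorphism of the nerve. As simplices are finite, a family
   of maximal simplices has a common vertex as soon as each of its finite subfamilies, i.e.
   each simplex of the nerve it contains, has one. Hence p and its inverse preserve families
   with a common vertex. Every such family lies in some Sigma_z, and by (1) the Sigma_x are
   the maximal ones, so p(Sigma_x) = Sigma_(f x) for a unique vertex f x. *)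

lemma simplicial_complex_subset:
  "simplicial_complex K \<Longrightarrow> \<sigma> \<in> K \<Longrightarrow> \<tau> \<subseteq> \<sigma> \<Longrightarrow> \<tau> \<noteq> {} \<Longrightarrow> \<tau> \<in> K"
  unfolding simplicial_complex_def by blast

lemma simplicial_complex_nonempty: "simplicial_complex K \<Longrightarrow> \<sigma> \<in> K \<Longrightarrow> \<sigma> \<noteq> {}"
  unfolding simplicial_complex_def by blast

lemma simplicial_complex_finite: "simplicial_complex K \<Longrightarrow> \<sigma> \<in> K \<Longrightarrow> finite \<sigma>"
  unfolding simplicial_complex_def by blast

lemma simplex_subset_vertices: "\<sigma> \<in> K \<Longrightarrow> \<sigma> \<subseteq> vertices K"
  by (auto simp: vertices_def)

lemma maximal_simplices_subset: "maximal_simplices K \<subseteq> K"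
  by (auto simp: maximal_simplices_def)

lemma maximal_simplices_subset_vertices: "\<sigma> \<in> maximal_simplices K \<Longrightarrow> \<sigma> \<subseteq> vertices K"
  using maximal_simplices_subset simplex_subset_vertices by blast

lemma Sigma_at_subset: "Sigma_at K x \<subseteq> maximal_simplices K"
  by (auto simp: Sigma_at_def)

lemma subset_Sigma_at_if_mem_Inter:
  "G \<subseteq> maximal_simplices K \<Longrightarrow> z \<in> \<Inter>G \<Longrightarrow> G \<subseteq> Sigma_at K z"
  by (auto simp: Sigma_at_def)

lemma exists_maximal_simplex_superset:
  assumes "simplicial_complex K" and "finite_dimensional K" and "\<tau> \<in> K"
  shows "\<exists>\<sigma>\<in>maximal_simplices K. \<tau> \<subseteq> \<sigma>"
proof -
  obtain n where n: "\<forall>\<sigma>\<in>K. card \<sigma> \<le> n"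
    using \<open>finite_dimensional K\<close> unfolding finite_dimensional_def by blast
  obtain \<sigma> where \<sigma>: "\<sigma> \<in> K" "\<tau> \<subseteq> \<sigma>"
    and greatest: "\<forall>\<rho>. \<rho> \<in> K \<and> \<tau> \<subseteq> \<rho> \<longrightarrow> card \<rho> \<le> card \<sigma>"
    using ex_has_greatest_nat[where P = "\<lambda>\<rho>. \<rho> \<in> K \<and> \<tau> \<subseteq> \<rho>" and f = card and b = "Suc n"]
      \<open>\<tau> \<in> K\<close> n by (metis le_imp_less_Suc order_refl)
  have "\<sigma> \<in> maximal_simplices K"
    unfolding maximal_simplices_def
  proof (intro CollectI conjI ballI impI \<open>\<sigma> \<in> K\<close>)
    fix \<rho> assume "\<rho> \<in> K" "\<sigma> \<subseteq> \<rho>"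
    then show "\<rho> = \<sigma>"
      using greatest \<sigma> simplicial_complex_finite[OF assms(1)] by (metis card_seteq order_trans)
  qed
  then show ?thesis using \<sigma> by blast
qed

lemma Sigma_at_nonempty:
  assumes "simplicial_complex K" and "finite_dimensional K" and "x \<in> vertices K"
  shows "Sigma_at K x \<noteq> {}"
proof -
  obtain \<tau> where "\<tau> \<in> K" "x \<in> \<tau>" using \<open>x \<in> vertices K\<close> by (auto simp: vertices_def)
  then show ?thesis
    using exists_maximal_simplex_superset[OF assms(1,2)] by (fastforce simp: Sigma_at_def)
qed

lemma vertices_nerve:
  assumes "simplicial_complex K"
  shows "vertices (nerve K) = maximal_simplices K"
proof
  show "vertices (nerve K) \<subseteq> maximal_simplices K" by (auto simp: vertices_def nerve_def)
  show "maximal_simplices K \<subseteq> vertices (nerve K)"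
  proof
    fix \<sigma> assume "\<sigma> \<in> maximal_simplices K"
    then have "{\<sigma>} \<in> nerve K"
      using simplicial_complex_nonempty[OF assms] maximal_simplices_subset
      by (auto simp: nerve_def)
    then show "\<sigma> \<in> vertices (nerve K)" by (auto simp: vertices_def)
  qed
qed

lemma Inter_nonempty_if_finite_subfamilies:
  assumes "\<sigma>\<^sub>0 \<in> G" and "finite \<sigma>\<^sub>0"
    and finite_subfamilies: "\<And>F. finite F \<Longrightarrow> F \<noteq> {} \<Longrightarrow> F \<subseteq> G \<Longrightarrow> \<Inter>F \<noteq> {}"
  shows "\<Inter>G \<noteq> {}"
proof
  assume "\<Inter>G = {}"
  then have "\<forall>z\<in>\<sigma>\<^sub>0. \<exists>\<tau>\<in>G. z \<notin> \<tau>" by blast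
  then obtain avoid where avoid: "\<forall>z\<in>\<sigma>\<^sub>0. avoid z \<in> G \<and> z \<notin> avoid z" by metis
  have "\<Inter>(insert \<sigma>\<^sub>0 (avoid ` \<sigma>\<^sub>0)) = {}" using avoid by auto
  moreover have "\<Inter>(insert \<sigma>\<^sub>0 (avoid ` \<sigma>\<^sub>0)) \<noteq> {}"
    by (rule finite_subfamilies) (use avoid \<open>\<sigma>\<^sub>0 \<in> G\<close> \<open>finite \<sigma>\<^sub>0\<close> in auto)
  ultimately show False by blast
qed

lemma simplicial_aut_inv_into:
  assumes "simplicial_aut K f"
  shows "simplicial_aut K (inv_into (vertices K) f)"
proof -
  let ?V = "vertices K" and ?g = "inv_into (vertices K) f"
  have bij: "bij_betw f ?V ?V" and simplex_iff: "\<And>\<sigma>. \<sigma> \<subseteq> ?V \<Longrightarrow> \<sigma> \<in> K \<longleftrightarrow> f ` \<sigma> \<in> K"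
    using assms unfolding simplicial_aut_def by auto
  have bij_inv: "bij_betw ?g ?V ?V" using bij by (rule bij_betw_inv_into)
  have "\<sigma> \<in> K \<longleftrightarrow> ?g ` \<sigma> \<in> K" if "\<sigma> \<subseteq> ?V" for \<sigma>
  proof -
    have "?g ` \<sigma> \<subseteq> ?V" using bij_inv that by (auto simp: bij_betw_def)
    moreover have "f ` ?g ` \<sigma> = \<sigma>"
      using bij that by (simp add: bij_betw_def image_inv_into_cancel)
    ultimately show ?thesis using simplex_iff by metis
  qed
  with bij_inv show ?thesis unfolding simplicial_aut_def by blast
qed

lemma simplicial_aut_image_maximal:
  assumes "simplicial_aut K f" and "\<sigma> \<in> maximal_simplices K"
  shows "f ` \<sigma> \<in> maximal_simplices K"
proof -
  let ?V = "vertices K" and ?g = "inv_into (vertices K) f"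
  have bij: "bij_betw f ?V ?V" and simplex_iff: "\<And>\<sigma>. \<sigma> \<subseteq> ?V \<Longrightarrow> \<sigma> \<in> K \<longleftrightarrow> f ` \<sigma> \<in> K"
    using assms(1) unfolding simplicial_aut_def by auto
  have \<sigma>: "\<sigma> \<in> K" "\<sigma> \<subseteq> ?V"
    using assms(2) maximal_simplices_subset maximal_simplices_subset_vertices by blast+
  show ?thesis unfolding maximal_simplices_def
  proof (intro CollectI conjI ballI impI)
    show "f ` \<sigma> \<in> K" using \<sigma> simplex_iff by blast
    fix \<tau> assume "\<tau> \<in> K" "f ` \<sigma> \<subseteq> \<tau>"
    have "\<tau> \<subseteq> ?V" using \<open>\<tau> \<in> K\<close> by (rule simplex_subset_vertices)
    then have "?g ` \<tau> \<in> K"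
      using simplicial_aut_inv_into[OF assms(1)] \<open>\<tau> \<in> K\<close> unfolding simplicial_aut_def by blast
    moreover have "\<sigma> \<subseteq> ?g ` \<tau>"
      using \<open>f ` \<sigma> \<subseteq> \<tau>\<close> \<sigma>(2) bij by (metis bij_betw_def image_mono inv_into_image_cancel)
    ultimately have "?g ` \<tau> = \<sigma>" using assms(2) by (auto simp: maximal_simplices_def)
    then show "\<tau> = f ` \<sigma>"
      using \<open>\<tau> \<subseteq> ?V\<close> bij by (metis bij_betw_def image_inv_into_cancel)
  qed
qed

lemma simplicial_aut_bij_betw_maximal:
  assumes "simplicial_aut K f"
  shows "bij_betw (image f) (maximal_simplices K) (maximal_simplices K)"
proof (rule bij_betw_byWitness[where f' = "image (inv_into (vertices K) f)"])
  have bij: "bij_betw f (vertices K) (vertices K)"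
    using assms unfolding simplicial_aut_def by blast
  then show "\<forall>\<sigma>\<in>maximal_simplices K. inv_into (vertices K) f ` f ` \<sigma> = \<sigma>"
    "\<forall>\<sigma>\<in>maximal_simplices K. f ` inv_into (vertices K) f ` \<sigma> = \<sigma>"
    using maximal_simplices_subset_vertices
    by (metis bij_betw_def inv_into_image_cancel image_inv_into_cancel)+
  show "image f ` maximal_simplices K \<subseteq> maximal_simplices K"
    "image (inv_into (vertices K) f) ` maximal_simplices K \<subseteq> maximal_simplices K"
    using simplicial_aut_image_maximal assms simplicial_aut_inv_into by blast+
qed

lemma Sigma_at_simplicial_aut:
  assumes "simplicial_aut K f" and "x \<in> vertices K"
  shows "Sigma_at K (f x) = image f ` Sigma_at K x"
proof -
  have "inj_on f (vertices K)" using assms(1) by (simp add: simplicial_aut_def bij_betw_def)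
  then have mem_iff: "f x \<in> f ` \<sigma> \<longleftrightarrow> x \<in> \<sigma>" if "\<sigma> \<in> maximal_simplices K" for \<sigma>
    using inj_on_image_mem_iff assms(2) maximal_simplices_subset_vertices[OF that] by metis
  have "Sigma_at K (f x) = {\<tau> \<in> image f ` maximal_simplices K. f x \<in> \<tau>}"
    using simplicial_aut_bij_betw_maximal[OF assms(1)] by (simp add: Sigma_at_def bij_betw_def)
  also have "\<dots> = image f ` Sigma_at K x"
    using mem_iff by (auto simp: Sigma_at_def)
  finally show ?thesis .
qed

definition nerve_map :: "'a set set \<Rightarrow> ('a \<Rightarrow> 'a) \<Rightarrow> 'a set \<Rightarrow> 'a set" where
  "nerve_map K f \<sigma> = (if \<sigma> \<in> maximal_simplices K then f ` \<sigma> else \<sigma>)"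

lemma image_mem_nerve_iff:
  assumes aut: "simplicial_aut K f" and F: "F \<subseteq> maximal_simplices K"
  shows "image f ` F \<in> nerve K \<longleftrightarrow> F \<in> nerve K"
proof -
  have inj: "inj_on f (vertices K)" using aut by (simp add: simplicial_aut_def bij_betw_def)
  have bij_M: "bij_betw (image f) (maximal_simplices K) (maximal_simplices K)"
    using aut by (rule simplicial_aut_bij_betw_maximal)
  have "finite (image f ` F) \<longleftrightarrow> finite F"
    using bij_M F by (meson bij_betw_def finite_image_iff inj_on_subset)
  moreover have "\<Inter>(image f ` F) \<noteq> {} \<longleftrightarrow> \<Inter>F \<noteq> {}" if "F \<noteq> {}"
  proof -
    obtain \<sigma> where "\<sigma> \<in> F" using \<open>F \<noteq> {}\<close> by blast
    moreover have "\<forall>\<tau>\<in>F. \<tau> \<subseteq> vertices K" using F maximal_simplices_subset_vertices by blast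
    ultimately have "f ` \<Inter>F = \<Inter>(image f ` F)"
      using image_INT[OF inj, of F "\<lambda>\<tau>. \<tau>"] by simp
    then show ?thesis by (metis image_is_empty)
  qed
  moreover have "image f ` F \<subseteq> maximal_simplices K" using bij_M F by (auto simp: bij_betw_def)
  ultimately show ?thesis unfolding nerve_def using F by blast
qed

lemma nerve_map_in_carrier:
  assumes "simplicial_complex K" and "f \<in> carrier (Aut_group K)"
  shows "nerve_map K f \<in> carrier (Aut_group (nerve K))"
proof -
  let ?M = "maximal_simplices K"
  have aut: "simplicial_aut K f" using assms(2) by (simp add: Aut_group_def)
  have image_eq: "nerve_map K f ` F = image f ` F" if "F \<subseteq> ?M" for F
    using that by (auto simp: nerve_map_def)
  have "bij_betw (image f) ?M ?M" using aut by (rule simplicial_aut_bij_betw_maximal)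
  then have "bij_betw (nerve_map K f) ?M ?M"
    by (rule bij_betw_cong[THEN iffD1, rotated]) (simp add: nerve_map_def)
  then have "simplicial_aut (nerve K) (nerve_map K f)"
    unfolding simplicial_aut_def vertices_nerve[OF assms(1)]
    using image_mem_nerve_iff[OF aut] image_eq by auto
  moreover have "\<forall>\<sigma>. \<sigma> \<notin> vertices (nerve K) \<longrightarrow> nerve_map K f \<sigma> = \<sigma>"
    unfolding vertices_nerve[OF assms(1)] by (simp add: nerve_map_def)
  ultimately show ?thesis by (simp add: Aut_group_def)
qed

lemma nerve_map_comp:
  assumes "g \<in> carrier (Aut_group K)"
  shows "nerve_map K (f \<circ> g) = nerve_map K f \<circ> nerve_map K g"
proof
  fix \<sigma>
  have "simplicial_aut K g" using assms by (simp add: Aut_group_def)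
  then show "nerve_map K (f \<circ> g) \<sigma> = (nerve_map K f \<circ> nerve_map K g) \<sigma>"
    using simplicial_aut_image_maximal[of K g \<sigma>] by (auto simp: nerve_map_def image_comp)
qed

lemma nerve_map_hom:
  assumes "simplicial_complex K"
  shows "nerve_map K \<in> hom (Aut_group K) (Aut_group (nerve K))"
  using nerve_map_in_carrier[OF assms] nerve_map_comp
  by (intro homI) (simp_all add: Aut_group_def)

lemma inj_on_nerve_map:
  assumes "inj_on (Sigma_at K) (vertices K)"
  shows "inj_on (nerve_map K) (carrier (Aut_group K))"
proof (rule inj_onI)
  fix f g assume f: "f \<in> carrier (Aut_group K)" and g: "g \<in> carrier (Aut_group K)"
    and eq: "nerve_map K f = nerve_map K g"
  have aut: "simplicial_aut K f" "simplicial_aut K g" using f g by (simp_all add: Aut_group_def)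
  show "f = g"
  proof
    fix x show "f x = g x"
    proof (cases "x \<in> vertices K")
      case True
      have "f ` \<sigma> = g ` \<sigma>" if "\<sigma> \<in> maximal_simplices K" for \<sigma>
        using fun_cong[OF eq, of \<sigma>] that by (simp add: nerve_map_def)
      then have "image f ` Sigma_at K x = image g ` Sigma_at K x"
        using Sigma_at_subset by (metis image_cong subsetD)
      then have "Sigma_at K (f x) = Sigma_at K (g x)"
        using Sigma_at_simplicial_aut[OF _ True] aut by metis
      moreover have "f x \<in> vertices K" "g x \<in> vertices K"
        using aut True by (auto simp: simplicial_aut_def bij_betw_def)
      ultimately show ?thesis using assms by (auto dest: inj_onD)
    next
      case False
      then show ?thesis using f g by (simp add: Aut_group_def)
    qed
  qed
qed

lemma simplicial_aut_if_image_maximal_simplices: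
  assumes "simplicial_complex K" and "finite_dimensional K"
    and bij: "bij_betw f (vertices K) (vertices K)"
    and image_M: "image f ` maximal_simplices K = maximal_simplices K"
  shows "simplicial_aut K f"
  unfolding simplicial_aut_def
proof (intro conjI bij allI impI)
  fix \<tau> assume "\<tau> \<subseteq> vertices K"
  have inj: "inj_on f (vertices K)" using bij by (simp add: bij_betw_def)
  show "\<tau> \<in> K \<longleftrightarrow> f ` \<tau> \<in> K"
  proof
    assume "\<tau> \<in> K"
    then obtain \<sigma> where \<sigma>: "\<sigma> \<in> maximal_simplices K" "\<tau> \<subseteq> \<sigma>"
      using exists_maximal_simplex_superset assms(1,2) by blast
    have "f ` \<sigma> \<in> image f ` maximal_simplices K" using \<sigma>(1) by (rule imageI)
    then have "f ` \<sigma> \<in> K" unfolding image_M using maximal_simplices_subset by blast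
    moreover have "f ` \<tau> \<subseteq> f ` \<sigma>" using \<sigma>(2) by (rule image_mono)
    moreover have "f ` \<tau> \<noteq> {}" using simplicial_complex_nonempty[OF assms(1) \<open>\<tau> \<in> K\<close>] by simp
    ultimately show "f ` \<tau> \<in> K" by (rule simplicial_complex_subset[OF assms(1)])
  next
    assume "f ` \<tau> \<in> K"
    then obtain \<sigma>' where "\<sigma>' \<in> maximal_simplices K" "f ` \<tau> \<subseteq> \<sigma>'"
      using exists_maximal_simplex_superset assms(1,2) by blast
    moreover have "\<sigma>' \<in> image f ` maximal_simplices K"
      using \<open>\<sigma>' \<in> maximal_simplices K\<close> unfolding image_M .
    ultimately obtain \<sigma> where \<sigma>: "\<sigma> \<in> maximal_simplices K" "f ` \<tau> \<subseteq> f ` \<sigma>"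
      by blast
    have "\<tau> \<subseteq> \<sigma>"
    proof
      fix x assume "x \<in> \<tau>"
      then have "f x \<in> f ` \<sigma>" using \<sigma>(2) by blast
      then show "x \<in> \<sigma>"
        using inj_on_image_mem_iff[OF inj] \<open>x \<in> \<tau>\<close> \<open>\<tau> \<subseteq> vertices K\<close>
          maximal_simplices_subset_vertices[OF \<sigma>(1)] by blast
    qed
    moreover have "\<tau> \<noteq> {}" using simplicial_complex_nonempty[OF assms(1) \<open>f ` \<tau> \<in> K\<close>] by blast
    ultimately show "\<tau> \<in> K"
      using \<sigma>(1) maximal_simplices_subset simplicial_complex_subset[OF assms(1)] by blast
  qed
qed

lemma nerve_aut_bij_betw:
  assumes "simplicial_complex K" and "simplicial_aut (nerve K) p"
  shows "bij_betw p (maximal_simplices K) (maximal_simplices K)"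
  using assms unfolding simplicial_aut_def vertices_nerve[OF assms(1)] by blast

lemma nerve_aut_inv_into:
  assumes "simplicial_complex K" and "simplicial_aut (nerve K) p"
  shows "simplicial_aut (nerve K) (inv_into (maximal_simplices K) p)"
  using simplicial_aut_inv_into[OF assms(2)] unfolding vertices_nerve[OF assms(1)] .

lemma nerve_aut_Inter_image_nonempty:
  assumes "simplicial_complex K" and aut: "simplicial_aut (nerve K) p"
    and G: "G \<subseteq> maximal_simplices K" "G \<noteq> {}" "\<Inter>G \<noteq> {}"
  shows "\<Inter>(p ` G) \<noteq> {}"
proof -
  have vertices_eq: "vertices (nerve K) = maximal_simplices K" using assms(1) by (rule vertices_nerve)
  obtain \<sigma> where "\<sigma> \<in> G" using G by blast
  show ?thesis
  proof (rule Inter_nonempty_if_finite_subfamilies)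
    show "p \<sigma> \<in> p ` G" using \<open>\<sigma> \<in> G\<close> by blast
    have "p \<sigma> \<in> maximal_simplices K"
      using \<open>\<sigma> \<in> G\<close> G(1) nerve_aut_bij_betw[OF assms(1) aut] by (auto simp: bij_betw_def)
    then show "finite (p \<sigma>)"
      using maximal_simplices_subset simplicial_complex_finite[OF assms(1)] by blast
  next
    fix F assume "finite F" "F \<noteq> {}" "F \<subseteq> p ` G"
    then obtain F' where F': "F' \<subseteq> G" "finite F'" "F = p ` F'"
      by (meson finite_subset_image)
    have "\<Inter>G \<subseteq> \<Inter>F'" using F'(1) by blast
    then have "F' \<in> nerve K" using F' G \<open>F \<noteq> {}\<close> by (auto simp: nerve_def)
    moreover have "F' \<subseteq> vertices (nerve K)" using F'(1) G(1) vertices_eq by blast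
    ultimately have "F \<in> nerve K"
      using aut F'(3) unfolding simplicial_aut_def by simp
    then show "\<Inter>F \<noteq> {}" by (simp add: nerve_def)
  qed
qed

lemma nerve_aut_image_Sigma_at_subset:
  assumes "simplicial_complex K" and "finite_dimensional K"
    and aut: "simplicial_aut (nerve K) p" and "x \<in> vertices K"
  shows "\<exists>z\<in>vertices K. p ` Sigma_at K x \<subseteq> Sigma_at K z"
proof -
  have "p ` maximal_simplices K = maximal_simplices K"
    using nerve_aut_bij_betw[OF assms(1) aut] by (rule bij_betw_imp_surj_on)
  then have image_M: "p ` Sigma_at K x \<subseteq> maximal_simplices K"
    using image_mono[OF Sigma_at_subset] by metis
  obtain \<sigma> where \<sigma>: "\<sigma> \<in> Sigma_at K x" using Sigma_at_nonempty[OF assms(1,2,4)] by blast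
  have "\<Inter>(p ` Sigma_at K x) \<noteq> {}"
  proof (rule nerve_aut_Inter_image_nonempty[OF assms(1) aut Sigma_at_subset])
    show "Sigma_at K x \<noteq> {}" using \<sigma> by blast
    have "x \<in> \<Inter>(Sigma_at K x)" by (simp add: Sigma_at_def)
    then show "\<Inter>(Sigma_at K x) \<noteq> {}" by blast
  qed
  then obtain z where z: "z \<in> \<Inter>(p ` Sigma_at K x)" by blast
  then have "z \<in> p \<sigma>" using \<sigma> by blast
  moreover have "p \<sigma> \<in> maximal_simplices K" using image_M \<sigma> by blast
  ultimately have "z \<in> vertices K" using maximal_simplices_subset_vertices by blast
  then show ?thesis using subset_Sigma_at_if_mem_Inter[OF image_M z] by blast
qed

(* For a vertex x the THE is well defined: existence is nerve_aut_image_Sigma_at below,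
   uniqueness is condition (1). *)
definition vertex_map :: "'a set set \<Rightarrow> ('a set \<Rightarrow> 'a set) \<Rightarrow> 'a \<Rightarrow> 'a" where
  "vertex_map K p x =
     (if x \<in> vertices K then THE z. z \<in> vertices K \<and> Sigma_at K z = p ` Sigma_at K x else x)"

context
  fixes K :: "'a set set"
  assumes complex: "simplicial_complex K"
    and fin_dim: "finite_dimensional K"
    and Sigma_at_subset_imp_eq:
      "\<forall>x\<in>vertices K. \<forall>y\<in>vertices K. Sigma_at K x \<subseteq> Sigma_at K y \<longrightarrow> x = y"
begin

lemma Sigma_at_inj: "x \<in> vertices K \<Longrightarrow> y \<in> vertices K \<Longrightarrow> Sigma_at K x = Sigma_at K y \<Longrightarrow> x = y"
  using Sigma_at_subset_imp_eq by blast

lemma nerve_aut_image_Sigma_at: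
  assumes aut: "simplicial_aut (nerve K) p" and "x \<in> vertices K"
  shows "\<exists>z\<in>vertices K. Sigma_at K z = p ` Sigma_at K x"
proof -
  let ?M = "maximal_simplices K"
  let ?q = "inv_into ?M p"
  have bij: "bij_betw p ?M ?M" using complex aut by (rule nerve_aut_bij_betw)
  have q_aut: "simplicial_aut (nerve K) ?q" using complex aut by (rule nerve_aut_inv_into)
  obtain z where z: "z \<in> vertices K" "p ` Sigma_at K x \<subseteq> Sigma_at K z"
    using nerve_aut_image_Sigma_at_subset[OF complex fin_dim aut \<open>x \<in> vertices K\<close>] by blast
  obtain y where y: "y \<in> vertices K" "?q ` Sigma_at K z \<subseteq> Sigma_at K y"
    using nerve_aut_image_Sigma_at_subset[OF complex fin_dim q_aut \<open>z \<in> vertices K\<close>] by blast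
  have qp: "?q ` p ` G = G" and pq: "p ` ?q ` G = G" if "G \<subseteq> ?M" for G
    using that bij by (simp_all add: bij_betw_def image_inv_into_cancel)
  have "Sigma_at K x \<subseteq> ?q ` Sigma_at K z"
    using image_mono[OF z(2), of ?q] qp[OF Sigma_at_subset] by simp
  then have "Sigma_at K x \<subseteq> Sigma_at K y" using y(2) by (rule order_trans)
  then have "y = x" using Sigma_at_subset_imp_eq \<open>x \<in> vertices K\<close> y(1) by blast
  then have "Sigma_at K z \<subseteq> p ` Sigma_at K x"
    using image_mono[OF y(2), of p] pq[OF Sigma_at_subset] by simp
  with z show ?thesis by blast
qed

lemma vertex_map_Sigma_at:
  assumes "simplicial_aut (nerve K) p" and "x \<in> vertices K"
  shows "vertex_map K p x \<in> vertices K \<and> Sigma_at K (vertex_map K p x) = p ` Sigma_at K x"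
proof -
  obtain z where z: "z \<in> vertices K" "Sigma_at K z = p ` Sigma_at K x"
    using nerve_aut_image_Sigma_at[OF assms] by blast
  have "\<exists>!z. z \<in> vertices K \<and> Sigma_at K z = p ` Sigma_at K x"
  proof (rule ex1I[of _ z])
    show "z \<in> vertices K \<and> Sigma_at K z = p ` Sigma_at K x" using z by blast
    show "w = z" if "w \<in> vertices K \<and> Sigma_at K w = p ` Sigma_at K x" for w
      using Sigma_at_inj[of w z] that z by simp
  qed
  then have "(THE z. z \<in> vertices K \<and> Sigma_at K z = p ` Sigma_at K x) \<in> vertices K \<and>
      Sigma_at K (THE z. z \<in> vertices K \<and> Sigma_at K z = p ` Sigma_at K x) = p ` Sigma_at K x"
    by (rule theI')
  moreover have "vertex_map K p x = (THE z. z \<in> vertices K \<and> Sigma_at K z = p ` Sigma_at K x)"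
    using \<open>x \<in> vertices K\<close> by (simp only: vertex_map_def if_True)
  ultimately show ?thesis by simp
qed

lemma bij_betw_vertex_map:
  assumes aut: "simplicial_aut (nerve K) p"
  shows "bij_betw (vertex_map K p) (vertices K) (vertices K)"
proof -
  let ?f = "vertex_map K p" and ?M = "maximal_simplices K"
  have bij: "bij_betw p ?M ?M" using complex aut by (rule nerve_aut_bij_betw)
  have "inj_on ?f (vertices K)"
  proof (rule inj_onI)
    fix x y assume xy: "x \<in> vertices K" "y \<in> vertices K" "?f x = ?f y"
    then have "p ` Sigma_at K x = p ` Sigma_at K y"
      using vertex_map_Sigma_at[OF aut xy(1)] vertex_map_Sigma_at[OF aut xy(2)] by simp
    then have "Sigma_at K x = Sigma_at K y"
      using bij Sigma_at_subset by (metis bij_betw_def inj_on_image_eq_iff)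
    then show "x = y" using Sigma_at_inj xy by blast
  qed
  moreover have "vertices K \<subseteq> ?f ` vertices K"
  proof
    fix z assume "z \<in> vertices K"
    obtain x where x: "x \<in> vertices K" "Sigma_at K x = inv_into ?M p ` Sigma_at K z"
      using nerve_aut_image_Sigma_at[OF nerve_aut_inv_into[OF complex aut] \<open>z \<in> vertices K\<close>]
      by blast
    moreover have "p ` inv_into ?M p ` Sigma_at K z = Sigma_at K z"
      using bij Sigma_at_subset by (metis bij_betw_def image_inv_into_cancel)
    ultimately have "Sigma_at K (?f x) = Sigma_at K z"
      using vertex_map_Sigma_at[OF aut x(1)] by simp
    then have "?f x = z"
      using Sigma_at_inj vertex_map_Sigma_at[OF aut x(1)] \<open>z \<in> vertices K\<close> by blast
    then show "z \<in> ?f ` vertices K" using x(1) by blast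
  qed
  moreover have "?f ` vertices K \<subseteq> vertices K" using vertex_map_Sigma_at[OF aut] by blast
  ultimately show ?thesis by (simp add: bij_betw_def subset_antisym)
qed

lemma image_vertex_map_maximal:
  assumes aut: "simplicial_aut (nerve K) p" and \<sigma>: "\<sigma> \<in> maximal_simplices K"
  shows "vertex_map K p ` \<sigma> = p \<sigma>"
proof -
  let ?f = "vertex_map K p" and ?M = "maximal_simplices K"
  have bij: "bij_betw p ?M ?M" using complex aut by (rule nerve_aut_bij_betw)
  then have p\<sigma>: "p \<sigma> \<in> ?M" using \<sigma> by (auto simp: bij_betw_def)
  have inj: "inj_on p ?M" using bij by (simp add: bij_betw_def)
  have mem_iff: "x \<in> \<sigma> \<longleftrightarrow> ?f x \<in> p \<sigma>" if "x \<in> vertices K" for x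
  proof -
    have "x \<in> \<sigma> \<longleftrightarrow> \<sigma> \<in> Sigma_at K x" using \<sigma> by (simp add: Sigma_at_def)
    also have "\<dots> \<longleftrightarrow> p \<sigma> \<in> p ` Sigma_at K x"
      using inj_on_image_mem_iff[OF inj \<sigma> Sigma_at_subset] by simp
    also have "\<dots> \<longleftrightarrow> p \<sigma> \<in> Sigma_at K (?f x)"
      using vertex_map_Sigma_at[OF aut that] by simp
    also have "\<dots> \<longleftrightarrow> ?f x \<in> p \<sigma>" using p\<sigma> by (simp add: Sigma_at_def)
    finally show ?thesis .
  qed
  show ?thesis
  proof
    show "?f ` \<sigma> \<subseteq> p \<sigma>" using mem_iff maximal_simplices_subset_vertices[OF \<sigma>] by blast
    show "p \<sigma> \<subseteq> ?f ` \<sigma>"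
    proof
      fix y assume "y \<in> p \<sigma>"
      then have "y \<in> ?f ` vertices K"
        using maximal_simplices_subset_vertices[OF p\<sigma>] bij_betw_vertex_map[OF aut]
        by (auto simp: bij_betw_def)
      then obtain x where "x \<in> vertices K" "y = ?f x" by blast
      then show "y \<in> ?f ` \<sigma>" using mem_iff \<open>y \<in> p \<sigma>\<close> by blast
    qed
  qed
qed

lemma nerve_map_surj:
  assumes "p \<in> carrier (Aut_group (nerve K))"
  shows "p \<in> nerve_map K ` carrier (Aut_group K)"
proof -
  let ?f = "vertex_map K p" and ?M = "maximal_simplices K"
  have aut: "simplicial_aut (nerve K) p"
    and id_outside: "\<And>\<sigma>. \<sigma> \<notin> ?M \<Longrightarrow> p \<sigma> = \<sigma>"
    using assms vertices_nerve[OF complex] by (auto simp: Aut_group_def)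
  have "image ?f ` ?M = p ` ?M" using image_vertex_map_maximal[OF aut] by simp
  also have "\<dots> = ?M" using nerve_aut_bij_betw[OF complex aut] by (simp add: bij_betw_def)
  finally have "simplicial_aut K ?f"
    using simplicial_aut_if_image_maximal_simplices[OF complex fin_dim bij_betw_vertex_map[OF aut]]
    by blast
  then have "?f \<in> carrier (Aut_group K)" by (simp add: Aut_group_def vertex_map_def)
  moreover have "nerve_map K ?f = p"
    using image_vertex_map_maximal[OF aut] id_outside by (auto simp: nerve_map_def fun_eq_iff)
  ultimately show ?thesis by (metis image_eqI)
qed

end

theorem theorem3p2:
  fixes X :: "'a set set"
  assumes "simplicial_complex X"
    and "finite_dimensional X"
    and "\<forall>x\<in>vertices X. \<forall>y\<in>vertices X. Sigma_at X x \<subseteq> Sigma_at X y \<longrightarrow> x = y"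
    and "\<forall>K\<in>X. \<forall>x\<in>vertices X. x \<notin> K \<longrightarrow> (\<exists>L\<in>maximal_simplices X. K \<subseteq> L \<and> x \<notin> L)"
  shows "Aut_group X \<cong> Aut_group (nerve X)"
proof -
  have "inj_on (Sigma_at X) (vertices X)"
    using assms(3) by (intro inj_onI) blast
  then have "inj_on (nerve_map X) (carrier (Aut_group X))"
    by (rule inj_on_nerve_map)
  moreover have "nerve_map X ` carrier (Aut_group X) = carrier (Aut_group (nerve X))"
    using nerve_map_in_carrier[OF assms(1)] nerve_map_surj[OF assms(1-3)] by blast
  ultimately have "nerve_map X \<in> iso (Aut_group X) (Aut_group (nerve X))"
    using nerve_map_hom[OF assms(1)] by (simp add: iso_def bij_betw_def)
  then show ?thesis by (rule is_isoI)
qed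

end
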